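(* Let $a\ge 1$ and $n=2^a$. If $\mathcal{S}$ is an $n\times n$ unitary-weight single-symbol decodable STBC transmitting $k$ independent complex symbols over $n$ channel uses, then its rate satisfies $$\frac{k}{2^a}\le\frac{2a}{2^a}=\frac{a}{2^{a-1}}.$$
   Context: A linear square STBC with $k$ complex symbols is given by $2k$ weight matrices $A_{iI},A_{iQ}\in\mathbb{C}^{n\times n}$ ($1\le i\le k$), linearly independent over $\mathbb{R}$, with codewords $S=\sum_{i=1}^k(x_{iI}A_{iI}+x_{iQ}A_{iQ})$, $x_i=x_{iI}+jx_{iQ}$ ranging over a complex constellation; its rate is $k/n$ complex symbols per channel use. It is a unitary-weight single-symbol decodable (SSD) code if: (i) $A_{iI}^HA_{iI}=A_{iQ}^HA_{iQ}=I_n$ for all $i$; (ii) for all $1\le i\ne j\le k$: $A_{iI}^HA_{jQ}+A_{jQ}^HA_{iI}=O_n$, $A_{iI}^HA_{jI}+A_{jI}^HA_{iI}=O_n$, $A_{iQ}^HA_{jQ}+A_{jQ}^HA_{iQ}=O_n$; and (iii) it is not the case that $A_{iI}^HA_{iQ}+A_{iQ}^HA_{iI}=O_n$ for all $i=1,\dots,k$. *)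

theory Defs
  imports "HOL-Analysis.Analysis"
begin

definition cadj :: "complex^'n^'n \<Rightarrow> complex^'n^'n" where
  "cadj A = (\<chi> i j. cnj (A $ j $ i))"

text \<open>Unitary-weight single-symbol decodable linear square STBC with k complex symbols,
  weight matrices AI i, AQ i for i < k (indices 0..k-1 instead of 1..k).\<close>
definition uw_ssd_stbc :: "nat \<Rightarrow> (nat \<Rightarrow> complex^'n^'n) \<Rightarrow> (nat \<Rightarrow> complex^'n^'n) \<Rightarrow> bool" where
  "uw_ssd_stbc k AI AQ \<longleftrightarrow>
     \<comment> \<open>the 2k weight matrices are linearly independent over the reals\<close>
     (\<forall>cI cQ :: nat \<Rightarrow> real.
        (\<Sum>i<k. cI i *\<^sub>R AI i + cQ i *\<^sub>R AQ i) = 0 \<longrightarrow> (\<forall>i<k. cI i = 0 \<and> cQ i = 0)) \<and>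
     \<comment> \<open>(i) unitary weights\<close>
     (\<forall>i<k. cadj (AI i) ** AI i = mat 1 \<and> cadj (AQ i) ** AQ i = mat 1) \<and>
     \<comment> \<open>(ii) SSD conditions\<close>
     (\<forall>i<k. \<forall>j<k. i \<noteq> j \<longrightarrow>
        cadj (AI i) ** AQ j + cadj (AQ j) ** AI i = 0 \<and>
        cadj (AI i) ** AI j + cadj (AI j) ** AI i = 0 \<and>
        cadj (AQ i) ** AQ j + cadj (AQ j) ** AQ i = 0) \<and>
     \<comment> \<open>(iii) not all AI i, AQ i pairs anticommute in the Hermitian sense\<close>
     \<not> (\<forall>i<k. cadj (AI i) ** AQ i + cadj (AQ i) ** AI i = 0)"

end

theory Submission
  imports Defs
begin

text \<open>Suppose \<open>k > 2a\<close> and let \<open>U\<close> be the first weight \<open>AI 0\<close>. Left multiplication by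
  \<open>U\<^sup>H\<close> makes every other weight skew-Hermitian and turns the SSD relations into
  anticommutation relations; in particular \<open>g i = U\<^sup>H AI (i + 1)\<close>, \<open>i < 2a\<close>, are \<open>2a\<close>
  anticommuting skew-Hermitian square roots of \<open>-1\<close> on \<open>\<complex>\<^sup>n\<close>, \<open>n = 2\<^sup>a\<close>. Their \<open>2\<^sup>2\<^sup>a\<close>
  ordered monomials, times \<open>1\<close> and \<open>\<i>\<close>, are orthogonal for \<open>Re tr (X\<^sup>H Y)\<close> and so fill the
  \<open>2n\<^sup>2\<close>-dimensional real space of matrices: only scalars commute with all \<open>g i\<close>. Hence a
  matrix anticommuting with all \<open>g i\<close> but \<open>g j\<close> is, up to the factor 2, \<open>p g j + q \<Gamma>\<^sup>H\<close>, where
  \<open>\<Gamma>\<close> is the product of all generators. Applied to the anticommuting matrices \<open>U\<^sup>H AQ 1\<close> and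
  \<open>U\<^sup>H AQ 2\<close> this forces \<open>q q' = 0\<close>, so some \<open>AQ j\<close> is a real multiple of \<open>AI j\<close>, against
  linear independence.\<close>

lemma matrix_add_rdistrib: "((A::'a::semiring_1^'n^'m) + B) ** C = A ** C + B ** C"
  by (simp add: matrix_matrix_mult_def vec_eq_iff distrib_right sum.distrib)

lemma matrix_mul_minus_left: "(- (A::'a::ring_1^'n^'m)) ** B = - (A ** B)"
  by (simp add: matrix_matrix_mult_def vec_eq_iff sum_negf)

lemma matrix_mul_minus_right: "(A::'a::ring_1^'n^'m) ** (- B) = - (A ** B)"
  by (simp add: matrix_matrix_mult_def vec_eq_iff sum_negf)

lemma matrix_diff_ldistrib: "(A::'a::ring_1^'n^'m) ** (B - C) = A ** B - A ** C"
  by (simp add: matrix_matrix_mult_def vec_eq_iff right_diff_distrib sum_subtractf)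

lemma matrix_diff_rdistrib: "((A::'a::ring_1^'n^'m) - B) ** C = A ** C - B ** C"
  by (simp add: matrix_matrix_mult_def vec_eq_iff left_diff_distrib sum_subtractf)

lemma mat_mult_left: "mat c ** (A::'a::semiring_1^'n^'m) = (\<chi> i j. c * A $ i $ j)"
  by (simp add: matrix_matrix_mult_def mat_def vec_eq_iff if_distrib if_distribR sum.delta
      cong del: if_weak_cong)

lemma mat_mult_commute: "mat c ** (A::'a::comm_semiring_1^'n^'n) = A ** mat c"
  by (simp add: mat_mult_left matrix_matrix_mult_def mat_def vec_eq_iff if_distrib if_distribR
      sum.delta' mult.commute cong del: if_weak_cong)

lemma mat_mult_mat: "mat c ** (mat d ** (A::'a::semiring_1^'n^'m)) = mat (c * d) ** A"
  by (simp add: mat_mult_left mult.assoc)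

lemma mat_add_mult: "mat c ** A + mat d ** A = mat (c + d) ** (A::'a::semiring_1^'n^'m)"
  by (simp add: mat_mult_left vec_eq_iff distrib_right)

lemma mat_uminus_mult: "mat (- c) ** A = - (mat c ** (A::'a::ring_1^'n^'m))"
  by (simp add: mat_mult_left vec_eq_iff)

lemma mat_of_real_mult: "mat (of_real r) ** A = r *\<^sub>R (A::'a::real_algebra_1^'n^'m)"
  by (simp add: mat_mult_left vec_eq_iff) (simp add: scaleR_conv_of_real)

lemma mat_inject: "(mat c :: 'a::zero^'n^'n) = mat d \<longleftrightarrow> c = d"
proof
  assume "(mat c :: 'a^'n^'n) = mat d"
  from arg_cong[OF this, of "\<lambda>M. M $ undefined $ undefined"] show "c = d"
    by (simp add: mat_def)
qed simp

lemma mat_eq_0_iff [simp]: "(mat c :: 'a::zero^'n^'n) = 0 \<longleftrightarrow> c = 0"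
  using mat_inject[of c 0] by simp

lemma mat_mult_mat_mult:
  "(mat c ** (A::'a::comm_semiring_1^'n^'n)) ** (mat d ** B) = mat (c * d) ** (A ** B)"
  by (metis mat_mult_commute mat_mult_mat matrix_mul_assoc)

lemma cadj_mult: "cadj (A ** B) = cadj B ** cadj A"
  by (simp add: cadj_def matrix_matrix_mult_def vec_eq_iff mult.commute)

lemma cadj_cadj [simp]: "cadj (cadj A) = A"
  by (simp add: cadj_def vec_eq_iff)

lemma cadj_add: "cadj (A + B) = cadj A + cadj B"
  by (simp add: cadj_def vec_eq_iff)

lemma cadj_scaleR: "cadj (r *\<^sub>R A) = r *\<^sub>R cadj A"
  by (simp add: cadj_def vec_eq_iff complex_cnj_scaleR)

lemma cadj_mat: "cadj (mat c) = mat (cnj c)"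
  by (simp add: cadj_def vec_eq_iff mat_def)

lemma unitary_right_inverse: "cadj U ** U = mat 1 \<Longrightarrow> U ** cadj U = mat 1"
  by (rule matrix_left_right_inverse[THEN iffD1])

lemma trace_cadj: "trace (cadj A) = cnj (trace A)"
  by (simp add: trace_def cadj_def)

lemma trace_mat_mult: "trace (mat c ** A) = c * trace (A::'a::semiring_1^'n^'n)"
  by (simp add: trace_def mat_mult_left sum_distrib_left)

lemma trace_uminus: "trace (- A) = - trace (A::'a::ring_1^'n^'n)"
  by (simp add: trace_def sum_negf)

lemma inner_eq_Re_trace: "inner A B = Re (trace (cadj A ** B))"
proof -
  have "Re (trace (cadj A ** B)) = (\<Sum>i\<in>UNIV. \<Sum>k\<in>UNIV. Re (cnj (A$k$i) * B$k$i))"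
    by (simp add: trace_def cadj_def matrix_matrix_mult_def Re_sum)
  also have "\<dots> = (\<Sum>k\<in>UNIV. \<Sum>i\<in>UNIV. Re (cnj (A$k$i) * B$k$i))"
    by (rule sum.swap)
  also have "\<dots> = inner A B"
    by (simp add: inner_vec_def inner_complex_def)
  finally show ?thesis by simp
qed

lemma inner_mat_mult:
  "inner (mat c ** A) (mat d ** B) = Re (cnj c * d * trace (cadj A ** B))"
proof -
  have "cadj (mat c ** A) ** (mat d ** B) = (mat (cnj c) ** cadj A) ** (mat d ** B)"
    by (simp add: cadj_mult cadj_mat mat_mult_commute)
  also have "\<dots> = mat (cnj c * d) ** (cadj A ** B)"
    by (rule mat_mult_mat_mult)
  finally have "cadj (mat c ** A) ** (mat d ** B) = mat (cnj c * d) ** (cadj A ** B)" .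
  then show ?thesis by (simp add: inner_eq_Re_trace trace_mat_mult)
qed

lemma card_le_DIM_if_pairwise_orthogonal:
  fixes f :: "'i \<Rightarrow> 'a::euclidean_space"
  assumes "finite I" and nonzero: "\<forall>x\<in>I. f x \<noteq> 0"
    and orth: "\<forall>x\<in>I. \<forall>y\<in>I. x \<noteq> y \<longrightarrow> inner (f x) (f y) = 0"
  shows "card I \<le> DIM('a)"
proof -
  have "inj_on f I"
  proof (rule inj_onI, rule ccontr)
    fix x y assume "x \<in> I" "y \<in> I" "f x = f y" "x \<noteq> y"
    then have "inner (f x) (f x) = 0" using orth by metis
    then show False using nonzero \<open>x \<in> I\<close> by simp
  qed
  moreover have "independent (f ` I)"
    using nonzero orth
    by (intro pairwise_orthogonal_independent) (auto simp: pairwise_def orthogonal_def)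
  then have "card (f ` I) \<le> DIM('a)"
    by (rule independent_bound[THEN conjunct2])
  ultimately show ?thesis by (simp add: card_image)
qed

lemma odd_card_Diff_singleton_symdiff:
  assumes "finite S" "finite T"
  shows "odd (card (sym_diff S T - {i})) \<longleftrightarrow> odd (card (S - {i}) + card (T - {i}))"
proof -
  let ?A = "S - {i}" and ?B = "T - {i}"
  have fin: "finite ?A" "finite ?B" using assms by auto
  have "card ?A = card (?A \<inter> ?B) + card (?A - ?B)" "card ?B = card (?A \<inter> ?B) + card (?B - ?A)"
    using card_Int_Diff[OF fin(1), of ?B] card_Int_Diff[OF fin(2), of ?A] by (simp_all only: Int_commute)
  moreover have "sym_diff S T - {i} = (?A - ?B) \<union> (?B - ?A)" by auto
  moreover have "card ((?A - ?B) \<union> (?B - ?A)) = card (?A - ?B) + card (?B - ?A)"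
    using fin by (intro card_Un_disjoint) auto
  ultimately have "card (S - {i}) + card (T - {i}) = card (sym_diff S T - {i}) + 2 * card (?A \<inter> ?B)"
    by simp
  then show ?thesis by simp
qed

lemma ex_odd_card_Diff_singleton:
  fixes m :: nat
  assumes "U \<subseteq> {..<m}" "U \<noteq> {}" "even m"
  shows "\<exists>i<m. odd (card (U - {i}))"
proof (cases "even (card U)")
  case True
  obtain i where i: "i \<in> U" using assms(2) by blast
  have "finite U" using assms(1) by (rule finite_subset) simp
  then have "card U > 0" using assms(2) by (simp add: card_gt_0_iff)
  then have "odd (card (U - {i}))" using True i \<open>finite U\<close> assms(2) by simp
  then show ?thesis using i assms(1) by blast
next
  case False
  then have "U \<noteq> {..<m}" using assms(3) by auto
  then obtain i where "i < m" "i \<notin> U" using assms(1) by blast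
  then show ?thesis using False by auto
qed

definition sign_commute :: "'a::real_algebra_1^'n^'n \<Rightarrow> 'a^'n^'n \<Rightarrow> real \<Rightarrow> bool" where
  "sign_commute G A s \<longleftrightarrow> A ** G = s *\<^sub>R (G ** A)"

lemma sign_commute_mult:
  assumes "sign_commute G A a" "sign_commute G B b"
  shows "sign_commute G (A ** B) (a * b)"
proof -
  have "(A ** B) ** G = A ** (b *\<^sub>R (G ** B))"
    using assms(2) by (simp add: sign_commute_def matrix_mul_assoc[symmetric])
  also have "\<dots> = b *\<^sub>R ((A ** G) ** B)"
    by (simp only: matrix_scalar_ac scalar_matrix_assoc[symmetric] matrix_mul_assoc)
  also have "\<dots> = (a * b) *\<^sub>R (G ** (A ** B))"
    using assms(1)
    by (simp add: sign_commute_def matrix_mul_assoc[symmetric] scalar_matrix_assoc[symmetric])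
  finally show ?thesis by (simp add: sign_commute_def)
qed

lemma sign_commute_mat: "sign_commute (G::'a::{real_algebra_1,comm_ring_1}^'n^'n) (mat c) 1"
  by (simp add: sign_commute_def mat_mult_commute)

lemma sign_commute_add: "sign_commute G A s \<Longrightarrow> sign_commute G B s \<Longrightarrow> sign_commute G (A + B) s"
  by (simp add: sign_commute_def matrix_add_rdistrib matrix_add_ldistrib scaleR_add_right)

lemma sign_commute_diff: "sign_commute G A s \<Longrightarrow> sign_commute G B s \<Longrightarrow> sign_commute G (A - B) s"
  by (simp add: sign_commute_def matrix_diff_rdistrib matrix_diff_ldistrib scaleR_diff_right)

lemma sign_commute_cadj:
  assumes "sign_commute G A s" "cadj G = - G" "s * s = 1"
  shows "sign_commute G (cadj A) s"
proof -
  have "cadj G ** cadj A = s *\<^sub>R (cadj A ** cadj G)"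
    using arg_cong[OF assms(1)[unfolded sign_commute_def], of cadj] by (simp add: cadj_mult cadj_scaleR)
  then have "s *\<^sub>R (G ** cadj A) = (s * s) *\<^sub>R (cadj A ** G)"
    using assms(2) by (simp add: matrix_mul_minus_left matrix_mul_minus_right)
  then show ?thesis using assms(3) by (simp add: sign_commute_def)
qed

lemma trace_eq_0_if_anticommute:
  assumes "sign_commute G (Q::complex^'n^'n) (-1)" "G ** G = - mat 1"
  shows "trace Q = 0"
proof -
  have "- trace Q = trace ((Q ** G) ** G)"
    using assms(2) by (simp add: matrix_mul_assoc[symmetric] matrix_mul_minus_right trace_uminus)
  also have "\<dots> = trace (G ** (Q ** G))" by (rule trace_mul_sym)
  also have "\<dots> = - trace ((G ** G) ** Q)"
    using assms(1) by (simp add: sign_commute_def matrix_mul_minus_right matrix_mul_assoc trace_uminus)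
  also have "\<dots> = trace Q"
    using assms(2) by (simp add: matrix_mul_minus_left trace_uminus)
  finally show ?thesis by simp
qed

lemma anticommutator_of_combinations:
  fixes A B D :: "'a::comm_ring_1^'n^'n"
  assumes "B ** A = - (A ** B)" "A ** D = - (D ** A)" "B ** D = - (D ** B)"
  shows "(mat p ** A + mat q ** D) ** (mat p' ** B + mat q' ** D)
       + (mat p' ** B + mat q' ** D) ** (mat p ** A + mat q ** D) = mat (2 * q * q') ** (D ** D)"
proof -
  have "2 * q * q' = q * q' + q * q'" by simp
  then have "mat (2 * q * q') ** (D ** D) = mat (q * q') ** (D ** D) + mat (q * q') ** (D ** D)"
    by (simp only: mat_add_mult)
  then show ?thesis
    by (simp add: matrix_add_ldistrib matrix_add_rdistrib mat_mult_mat_mult assms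
        matrix_mul_minus_right mult.commute algebra_simps)
qed

primrec clifford_monomial :: "(nat \<Rightarrow> 'a::semiring_1^'n^'n) \<Rightarrow> nat set \<Rightarrow> nat \<Rightarrow> 'a^'n^'n" where
  "clifford_monomial g S 0 = mat 1"
| "clifford_monomial g S (Suc l) = clifford_monomial g S l ** (if l \<in> S then g l else mat 1)"

lemma clifford_monomial_empty [simp]: "clifford_monomial g {} l = mat 1"
  by (induction l) simp_all

locale clifford_system =
  fixes g :: "nat \<Rightarrow> complex^'n::finite^'n" and m :: nat
  assumes square: "i < m \<Longrightarrow> g i ** g i = - mat 1"
    and skew: "i < m \<Longrightarrow> cadj (g i) = - g i"
    and anticommute: "i < m \<Longrightarrow> j < m \<Longrightarrow> i \<noteq> j \<Longrightarrow> g i ** g j = - (g j ** g i)"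
begin

abbreviation monomial :: "nat set \<Rightarrow> complex^'n^'n" where
  "monomial S \<equiv> clifford_monomial g S m"

lemma unitary: "i < m \<Longrightarrow> cadj (g i) ** g i = mat 1"
  using skew square by (simp add: matrix_mul_minus_left)

lemma sign_commute_generator:
  "i < m \<Longrightarrow> j < m \<Longrightarrow> sign_commute (g i) (g j) (if j = i then 1 else -1)"
  using anticommute[of j i] by (simp add: sign_commute_def)

lemma sign_commute_clifford_monomial:
  assumes "i < m" "l \<le> m"
  shows "sign_commute (g i) (clifford_monomial g S l) ((-1) ^ card (S \<inter> {..<l} - {i}))"
  using assms(2)
proof (induction l)
  case 0
  then show ?case by (simp add: sign_commute_mat)
next
  case (Suc l)
  then have IH: "sign_commute (g i) (clifford_monomial g S l) ((-1) ^ card (S \<inter> {..<l} - {i}))"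
    by simp
  show ?case
  proof (cases "l \<in> S \<and> l \<noteq> i")
    case True
    then have "S \<inter> {..<Suc l} - {i} = insert l (S \<inter> {..<l} - {i})" by auto
    then have "card (S \<inter> {..<Suc l} - {i}) = Suc (card (S \<inter> {..<l} - {i}))" by simp
    moreover have "sign_commute (g i) (g l) (-1)"
      using sign_commute_generator[of i l] assms(1) Suc.prems True by simp
    ultimately show ?thesis using sign_commute_mult[OF IH, of "g l" "-1"] True by simp
  next
    case False
    then have "S \<inter> {..<Suc l} - {i} = S \<inter> {..<l} - {i}" by (auto simp: less_Suc_eq)
    moreover have "sign_commute (g i) (if l \<in> S then g l else mat 1) 1"
      using False sign_commute_generator[of i l] assms(1) Suc.prems by (auto simp: sign_commute_mat)
    ultimately show ?thesis
      using sign_commute_mult[OF IH, of "if l \<in> S then g l else mat 1" 1]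
      by simp
  qed
qed

lemma sign_commute_monomial:
  "i < m \<Longrightarrow> S \<subseteq> {..<m} \<Longrightarrow> sign_commute (g i) (monomial S) ((-1) ^ card (S - {i}))"
  using sign_commute_clifford_monomial[of i m S] by (simp add: Int_absorb2)

lemma sign_commute_cadj_monomial:
  "i < m \<Longrightarrow> S \<subseteq> {..<m} \<Longrightarrow> sign_commute (g i) (cadj (monomial S)) ((-1) ^ card (S - {i}))"
  by (rule sign_commute_cadj[OF sign_commute_monomial skew]) (simp_all flip: power_add)

lemma mult_square_right: "i < m \<Longrightarrow> X ** g i ** g i = - X"
  using square by (simp add: matrix_mul_assoc[symmetric] matrix_mul_minus_right)

lemma sign_commute_sandwich:
  assumes "i < m" "j < m" "i \<noteq> j" "sign_commute (g i) c (-1)"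
  shows "sign_commute (g i) (g j ** c ** g j) (-1)"
proof -
  have "sign_commute (g i) (g j) (-1)"
    using sign_commute_generator[OF assms(1,2)] assms(3) by simp
  from sign_commute_mult[OF sign_commute_mult[OF this assms(4)] this] show ?thesis by simp
qed

lemma sign_commute_sandwich_diff: "j < m \<Longrightarrow> sign_commute (g j) (c - g j ** c ** g j) 1"
  by (simp add: sign_commute_def matrix_diff_ldistrib matrix_diff_rdistrib matrix_mul_assoc
      mult_square_right square matrix_mul_minus_left)

lemma sign_commute_sandwich_add: "j < m \<Longrightarrow> sign_commute (g j) (c + g j ** c ** g j) (-1)"
  by (simp add: sign_commute_def matrix_add_ldistrib matrix_add_rdistrib matrix_mul_assoc
      mult_square_right square matrix_mul_minus_left)

lemma unitary_clifford_monomial: "l \<le> m \<Longrightarrow> cadj (clifford_monomial g S l) ** clifford_monomial g S l = mat 1"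
proof (induction l)
  case (Suc l)
  let ?h = "if l \<in> S then g l else mat 1"
  have "cadj (clifford_monomial g S (Suc l)) ** clifford_monomial g S (Suc l)
      = cadj ?h ** ((cadj (clifford_monomial g S l) ** clifford_monomial g S l) ** ?h)"
    by (simp only: clifford_monomial.simps cadj_mult matrix_mul_assoc)
  also have "\<dots> = mat 1"
    using Suc unitary by (simp add: cadj_mat)
  finally show ?case .
qed (simp add: cadj_mat)

end

locale minimal_clifford_system = clifford_system g m for g :: "nat \<Rightarrow> complex^'n::finite^'n" and m +
  assumes even_m: "even m"
    and card_sq: "CARD('n) ^ 2 = 2 ^ m"
begin

lemma trace_cadj_monomial_mult_monomial:
  assumes "S \<subseteq> {..<m}" "T \<subseteq> {..<m}" "S \<noteq> T"
  shows "trace (cadj (monomial S) ** monomial T) = 0"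
proof -
  have "sym_diff S T \<subseteq> {..<m}" "sym_diff S T \<noteq> {}" using assms by auto
  then obtain i where i: "i < m" "odd (card (sym_diff S T - {i}))"
    using ex_odd_card_Diff_singleton even_m by blast
  have "finite S" "finite T"
    using finite_subset[OF assms(1)] finite_subset[OF assms(2)] by simp_all
  then have "odd (card (S - {i}) + card (T - {i}))"
    using odd_card_Diff_singleton_symdiff[of S T i] i(2) by blast
  then have "sign_commute (g i) (cadj (monomial S) ** monomial T) (-1)"
    using sign_commute_mult[OF sign_commute_cadj_monomial[OF i(1) assms(1)]
        sign_commute_monomial[OF i(1) assms(2)]]
    by (simp flip: power_add)
  then show ?thesis using trace_eq_0_if_anticommute square i(1) by blast
qed

lemma inner_monomials:
  assumes "S \<subseteq> {..<m}" "T \<subseteq> {..<m}"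
  shows "inner (mat c ** monomial S) (mat d ** monomial T)
    = (if S = T then Re (cnj c * d) * CARD('n) else 0)"
  using trace_cadj_monomial_mult_monomial[OF assms] unitary_clifford_monomial[of m T]
  by (simp add: inner_mat_mult trace_I)

lemma trace_central_mult_monomial:
  assumes central: "\<forall>i<m. sign_commute (g i) Y 1" and "trace Y = 0" and "S \<subseteq> {..<m}"
  shows "trace (Y ** monomial S) = 0"
proof (cases "S = {}")
  case False
  obtain i where i: "i < m" "odd (card (S - {i}))"
    using ex_odd_card_Diff_singleton even_m assms(3) False by blast
  moreover have "sign_commute (g i) (Y ** monomial S) (1 * (-1) ^ card (S - {i}))"
    using sign_commute_mult[OF _ sign_commute_monomial] central i(1) assms(3) by blast
  ultimately have "sign_commute (g i) (Y ** monomial S) (-1)" by simp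
  then show ?thesis using trace_eq_0_if_anticommute square i(1) by blast
qed (simp add: assms(2))

lemma inner_central_traceless_monomial:
  assumes central: "\<forall>i<m. sign_commute (g i) Y 1" and traceless: "trace Y = 0"
    and "T \<subseteq> {..<m}"
  shows "inner Y (mat c ** monomial T) = 0"
proof -
  have "\<forall>i<m. sign_commute (g i) (cadj Y) 1"
    using central sign_commute_cadj[OF _ skew] by simp
  moreover have "trace (cadj Y) = 0" by (simp add: trace_cadj traceless)
  ultimately have "trace (cadj Y ** monomial T) = 0"
    by (rule trace_central_mult_monomial[OF _ _ assms(3)])
  then show ?thesis using inner_mat_mult[of 1 Y c] by simp
qed

lemma central_traceless_eq_0:
  assumes central: "\<forall>i<m. sign_commute (g i) Y 1" and traceless: "trace Y = 0"
  shows "Y = 0"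
proof (rule ccontr)
  assume "Y \<noteq> 0"
  \<comment> \<open>then \<open>Y\<close> and the \<open>2\<^sup>m\<^sup>+\<^sup>1\<close> matrices \<open>c \<cdot> monomial S\<close>, \<open>c \<in> {1, \<i>}\<close>, are pairwise orthogonal
    and nonzero in a real space of dimension \<open>2 CARD('n)\<^sup>2 = 2\<^sup>m\<^sup>+\<^sup>1\<close>\<close>
  define I :: "(nat set \<times> complex) option set"
    where "I = insert None (Some ` (Pow {..<m} \<times> {1, \<i>}))"
  define f where "f x = (case x of None \<Rightarrow> Y | Some (S, c) \<Rightarrow> mat c ** monomial S)" for x
  have "card (Pow {..<m} \<times> {1, \<i>}) = 2 ^ m * 2"
    by (simp add: card_cartesian_product card_Pow)
  then have card_I: "card I = 2 ^ m * 2 + 1"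
    by (simp add: I_def card_image)
  have "\<forall>x\<in>I. f x \<noteq> 0"
  proof
    fix x assume "x \<in> I"
    show "f x \<noteq> 0"
    proof (cases x)
      case (Some p)
      then obtain S c where "x = Some (S, c)" "S \<subseteq> {..<m}" "c = 1 \<or> c = \<i>"
        using \<open>x \<in> I\<close> by (cases p) (auto simp: I_def)
      then have "inner (f x) (f x) \<noteq> 0"
        using inner_monomials[of S S c c] by (auto simp: f_def)
      then show ?thesis by auto
    qed (simp add: f_def \<open>Y \<noteq> 0\<close>)
  qed
  moreover have "\<forall>x\<in>I. \<forall>y\<in>I. x \<noteq> y \<longrightarrow> inner (f x) (f y) = 0"
  proof (intro ballI impI)
    fix x y assume "x \<in> I" "y \<in> I" "x \<noteq> y"
    then consider
        (monomials) S c T d where "x = Some (S, c)" "y = Some (T, d)" "S \<subseteq> {..<m}" "T \<subseteq> {..<m}"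
          "c \<in> {1, \<i>}" "d \<in> {1, \<i>}"
      | (Y_left) T d where "x = None" "y = Some (T, d)" "T \<subseteq> {..<m}"
      | (Y_right) S c where "x = Some (S, c)" "y = None" "S \<subseteq> {..<m}"
      by (auto simp: I_def)
    then show "inner (f x) (f y) = 0"
    proof cases
      case monomials
      then show ?thesis
        using \<open>x \<noteq> y\<close> inner_monomials[of S T c d] by (auto simp: f_def)
    next
      case Y_left
      then show ?thesis using inner_central_traceless_monomial[OF central traceless] by (simp add: f_def)
    next
      case Y_right
      then show ?thesis
        using inner_central_traceless_monomial[OF central traceless] by (simp add: f_def inner_commute)
    qed
  qed
  ultimately have "card I \<le> DIM(complex^'n^'n)"
    by (intro card_le_DIM_if_pairwise_orthogonal) (simp_all add: I_def)
  then show False using card_I card_sq by (simp add: power2_eq_square)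
qed

lemma central_eq_mat:
  assumes "\<forall>i<m. sign_commute (g i) X 1"
  obtains c where "X = mat c"
proof
  let ?c = "trace X / of_nat CARD('n)"
  have "trace (mat ?c :: complex^'n^'n) = trace X"
    using trace_mat_mult[of ?c "mat 1 :: complex^'n^'n"] by (simp add: trace_I)
  moreover have "\<forall>i<m. sign_commute (g i) (X - mat ?c) 1"
    using assms by (simp add: sign_commute_diff sign_commute_mat)
  ultimately have "X - mat ?c = 0"
    by (intro central_traceless_eq_0) (simp_all add: trace_sub)
  then show "X = mat ?c" by simp
qed

definition volume :: "complex^'n^'n" where
  "volume = monomial {..<m}"

lemma sign_commute_volume: "i < m \<Longrightarrow> sign_commute (g i) volume (-1)"
  using sign_commute_monomial[of i "{..<m}"] even_m by (simp add: volume_def)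

lemma sign_commute_cadj_volume: "i < m \<Longrightarrow> sign_commute (g i) (cadj volume) (-1)"
  by (rule sign_commute_cadj[OF sign_commute_volume skew]) simp_all

lemma unitary_volume: "cadj volume ** volume = mat 1" "volume ** cadj volume = mat 1"
  using unitary_clifford_monomial[of m "{..<m}"] unitary_right_inverse by (auto simp: volume_def)

lemma double_eq_generator_plus_volume:
  assumes j: "j < m" and anti: "\<forall>i<m. i \<noteq> j \<longrightarrow> sign_commute (g i) c (-1)"
  obtains p q where "c + c = mat p ** g j + mat q ** cadj volume"
proof -
  define u where "u = c - g j ** c ** g j"
  define v where "v = c + g j ** c ** g j"
  have "sign_commute (g i) (u ** g j) 1" if i: "i < m" for i
  proof (cases "i = j")
    case True
    then show ?thesis
      using sign_commute_mult[OF sign_commute_sandwich_diff[OF j] sign_commute_generator[OF j j]]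
      by (simp add: u_def)
  next
    case False
    then have "sign_commute (g i) u (-1)"
      using anti sign_commute_sandwich[OF i j False] i by (simp add: u_def sign_commute_diff)
    then show ?thesis
      using sign_commute_mult[OF _ sign_commute_generator[OF i j]] False by fastforce
  qed
  then obtain a where a: "u ** g j = mat a" using central_eq_mat by blast
  have "sign_commute (g i) v (-1)" if i: "i < m" for i
    using sign_commute_sandwich_add[OF j] sign_commute_sandwich[OF i j] anti i
    by (cases "i = j") (simp_all add: v_def sign_commute_add)
  then have "sign_commute (g i) (v ** volume) 1" if i: "i < m" for i
    using sign_commute_mult[OF _ sign_commute_volume[OF i]] i by fastforce
  then obtain b where b: "v ** volume = mat b" using central_eq_mat by blast
  have "u = - (u ** g j ** g j)" by (simp add: mult_square_right[OF j])
  also have "\<dots> = mat (- a) ** g j" by (simp add: a mat_uminus_mult)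
  finally have u: "u = mat (- a) ** g j" .
  have "v = v ** (volume ** cadj volume)" by (simp add: unitary_volume)
  then have v: "v = mat b ** cadj volume" by (simp add: matrix_mul_assoc b)
  have "c + c = u + v" by (simp add: u_def v_def)
  then show ?thesis unfolding u v by (rule that)
qed

lemma anticommuting_pair_degenerate:
  assumes j: "j < m" and j': "j' < m" "j' \<noteq> j"
    and anti: "\<forall>i<m. i \<noteq> j \<longrightarrow> sign_commute (g i) c (-1)"
    and anti': "\<forall>i<m. i \<noteq> j' \<longrightarrow> sign_commute (g i) c' (-1)"
    and anticommute_pair: "c ** c' + c' ** c = 0"
  shows "(\<exists>p. c + c = mat p ** g j) \<or> (\<exists>p. c' + c' = mat p ** g j')"
proof -
  let ?D = "cadj volume"
  obtain p q where pq: "c + c = mat p ** g j + mat q ** ?D"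
    using double_eq_generator_plus_volume[OF j anti] .
  obtain p' q' where pq': "c' + c' = mat p' ** g j' + mat q' ** ?D"
    using double_eq_generator_plus_volume[OF j' (1) anti'] .
  have "c' ** c = - (c ** c')" using anticommute_pair by (simp add: eq_neg_iff_add_eq_0 add.commute)
  then have "(c + c) ** (c' + c') + (c' + c') ** (c + c) = 0"
    by (simp only: matrix_add_ldistrib matrix_add_rdistrib) (simp add: algebra_simps)
  moreover have "g j ** ?D = - (?D ** g j)" "g j' ** ?D = - (?D ** g j')"
    using sign_commute_cadj_volume[OF j] sign_commute_cadj_volume[OF j'(1)]
    by (simp_all add: sign_commute_def)
  ultimately have "mat (2 * q * q') ** (?D ** ?D) = 0"
    using anticommutator_of_combinations[of "g j'" "g j" ?D p q p' q'] anticommute[OF j j'(1)] j'(2)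
    by (simp add: pq pq')
  then have "mat (2 * q * q') ** ((?D ** ?D) ** (volume ** volume)) = 0"
    by (simp add: matrix_mul_assoc)
  moreover have "(?D ** ?D) ** (volume ** volume) = mat 1"
    using unitary_volume by (simp add: matrix_mul_assoc) (simp flip: matrix_mul_assoc)
  ultimately have "q = 0 \<or> q' = 0" by simp
  then show ?thesis using pq pq' by auto
qed

end

lemma skew_double_eq_mat_mult_imp_real_multiple:
  fixes C G :: "complex^'n^'n"
  assumes "cadj C = - C" "cadj G = - G" "cadj G ** G = mat 1" "C + C = mat p ** G"
  shows "\<exists>r. C = r *\<^sub>R G"
proof
  have "- (mat p ** G) = - (C + C)" by (simp only: assms(4))
  also have "\<dots> = cadj (mat p ** G)" by (simp only: assms(1,4)[symmetric] cadj_add minus_add_distrib)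
  also have "\<dots> = - (mat (cnj p) ** G)"
    using assms(2) by (simp add: cadj_mult cadj_mat mat_mult_commute matrix_mul_minus_left)
  finally have "(mat p ** G) ** cadj G = (mat (cnj p) ** G) ** cadj G" by simp
  then have "mat p = (mat (cnj p) :: complex^'n^'n)"
    using unitary_right_inverse[OF assms(3)] by (simp flip: matrix_mul_assoc)
  then have "p = of_real (Re p)" by (simp add: mat_inject complex_eq_iff)
  then have "2 *\<^sub>R C = Re p *\<^sub>R G"
    using assms(4) mat_of_real_mult[of "Re p" G] by (simp only: scaleR_2)
  then have "(1 / 2) *\<^sub>R (2 *\<^sub>R C) = (1 / 2) *\<^sub>R (Re p *\<^sub>R G)" by simp
  then show "C = (Re p / 2) *\<^sub>R G" by simp
qed

lemma skew_left_normalized: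
  assumes "cadj U ** X + cadj X ** U = 0"
  shows "cadj (cadj U ** X) = - (cadj U ** X)"
  using assms by (simp add: cadj_mult eq_neg_iff_add_eq_0 add.commute)

lemma left_normalized_mult:
  assumes "U ** cadj U = mat 1" "cadj U ** X + cadj X ** U = 0"
  shows "(cadj U ** X) ** (cadj U ** Y) = - (cadj X ** Y)"
proof -
  have "cadj U ** X = - (cadj X ** U)"
    using assms(2) by (simp add: eq_neg_iff_add_eq_0)
  then show ?thesis
    using assms(1) by (simp add: matrix_mul_minus_left matrix_mul_assoc[symmetric])
      (simp add: matrix_mul_assoc)
qed

lemma uw_ssd_stbc_unitary_weights:
  assumes "uw_ssd_stbc k AI AQ" "i < k" "X \<in> {AI i, AQ i}"
  shows "cadj X ** X = mat 1"
  using assms unfolding uw_ssd_stbc_def by auto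

lemma uw_ssd_stbc_weights_anticommute:
  assumes "uw_ssd_stbc k AI AQ" "i < k" "j < k" "i \<noteq> j" "X \<in> {AI i, AQ i}" "Y \<in> {AI j, AQ j}"
  shows "cadj X ** Y + cadj Y ** X = 0"
proof -
  have "cadj (AI i) ** AQ j + cadj (AQ j) ** AI i = 0"
    "cadj (AI j) ** AQ i + cadj (AQ i) ** AI j = 0"
    "cadj (AI i) ** AI j + cadj (AI j) ** AI i = 0"
    "cadj (AQ i) ** AQ j + cadj (AQ j) ** AQ i = 0"
    using assms(1-4) unfolding uw_ssd_stbc_def by auto
  then show ?thesis using assms(5,6) by (auto simp: add.commute)
qed

lemma uw_ssd_stbc_not_real_multiple:
  assumes "uw_ssd_stbc k AI AQ" "j < k"
  shows "AQ j \<noteq> r *\<^sub>R AI j"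
proof
  assume "AQ j = r *\<^sub>R AI j"
  define cI :: "nat \<Rightarrow> real" where "cI i = (if i = j then - r else 0)" for i
  define cQ :: "nat \<Rightarrow> real" where "cQ i = (if i = j then 1 else 0)" for i
  have "(\<Sum>i<k. cI i *\<^sub>R AI i + cQ i *\<^sub>R AQ i) = (- r) *\<^sub>R AI j + AQ j"
    using assms(2) by (simp add: cI_def cQ_def if_distrib if_distribR sum.delta cong: if_cong)
  also have "\<dots> = 0" by (simp add: \<open>AQ j = r *\<^sub>R AI j\<close>)
  finally have "cQ j = 0"
    using assms unfolding uw_ssd_stbc_def by blast
  then show False by (simp add: cQ_def)
qed

lemma uw_ssd_stbc_normalized:
  assumes code: "uw_ssd_stbc k AI AQ" and "0 < i" "i < k" "X \<in> {AI i, AQ i}"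
  shows "cadj (cadj (AI 0) ** X) = - (cadj (AI 0) ** X)"
    and "(cadj (AI 0) ** X) ** (cadj (AI 0) ** Y) = - (cadj X ** Y)"
proof -
  have "cadj (AI 0) ** X + cadj X ** AI 0 = 0"
    using uw_ssd_stbc_weights_anticommute[OF code, of 0 i "AI 0" X] assms(2-4) by simp
  moreover have "AI 0 ** cadj (AI 0) = mat 1"
    using uw_ssd_stbc_unitary_weights[OF code, of 0] assms(3) by (simp add: unitary_right_inverse)
  ultimately show "cadj (cadj (AI 0) ** X) = - (cadj (AI 0) ** X)"
    and "(cadj (AI 0) ** X) ** (cadj (AI 0) ** Y) = - (cadj X ** Y)"
    by (simp_all add: skew_left_normalized left_normalized_mult)
qed

lemma uw_ssd_stbc_normalized_anticommute:
  assumes code: "uw_ssd_stbc k AI AQ" and "0 < i" "i < k" "0 < j" "j < k" "i \<noteq> j"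
    and "X \<in> {AI i, AQ i}" "Y \<in> {AI j, AQ j}"
  shows "(cadj (AI 0) ** Y) ** (cadj (AI 0) ** X) = - ((cadj (AI 0) ** X) ** (cadj (AI 0) ** Y))"
proof -
  have "cadj Y ** X = - (cadj X ** Y)"
    using uw_ssd_stbc_weights_anticommute[OF code assms(3,5,6,7,8)]
    by (simp add: eq_neg_iff_add_eq_0 add.commute)
  then show ?thesis
    using uw_ssd_stbc_normalized(2)[OF code assms(2,3,7), of Y]
      uw_ssd_stbc_normalized(2)[OF code assms(4,5,8), of X]
    by (simp only: minus_minus)
qed

lemma uw_ssd_stbc_normalized_clifford_system:
  assumes code: "uw_ssd_stbc k AI AQ" and "m < k" "even m" "CARD('n) ^ 2 = 2 ^ m"
  shows "minimal_clifford_system (\<lambda>i. cadj (AI 0) ** (AI (Suc i) :: complex^'n^'n)) m"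
proof unfold_locales
  fix i assume "i < m"
  then have i: "0 < Suc i" "Suc i < k" "AI (Suc i) \<in> {AI (Suc i), AQ (Suc i)}"
    using assms(2) by simp_all
  show "(cadj (AI 0) ** AI (Suc i)) ** (cadj (AI 0) ** AI (Suc i)) = - mat 1"
    using uw_ssd_stbc_normalized(2)[OF code i, of "AI (Suc i)"]
      uw_ssd_stbc_unitary_weights[OF code i(2,3)]
    by simp
  show "cadj (cadj (AI 0) ** AI (Suc i)) = - (cadj (AI 0) ** AI (Suc i))"
    by (rule uw_ssd_stbc_normalized(1)[OF code i])
next
  fix i j assume "i < m" "j < m" "i \<noteq> j"
  then show "(cadj (AI 0) ** AI (Suc i)) ** (cadj (AI 0) ** AI (Suc j))
    = - ((cadj (AI 0) ** AI (Suc j)) ** (cadj (AI 0) ** AI (Suc i)))"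
    using uw_ssd_stbc_normalized_anticommute[OF code, of "Suc j" "Suc i"] assms(2) by simp
qed (use assms in simp_all)

lemma uw_ssd_stbc_symbols_le:
  fixes AI AQ :: "nat \<Rightarrow> complex^'n^'n"
  assumes "1 \<le> a" "CARD('n) = 2 ^ a" and code: "uw_ssd_stbc k AI AQ"
  shows "k \<le> 2 * a"
proof (rule ccontr)
  assume "\<not> k \<le> 2 * a"
  then have k: "2 * a < k" by simp
  define N :: "complex^'n^'n \<Rightarrow> complex^'n^'n" where "N X = cadj (AI 0) ** X" for X
  define g where "g i = N (AI (Suc i))" for i
  have "CARD('n) ^ 2 = 2 ^ (2 * a)"
    using assms(2) by (metis mult.commute power_mult)
  then interpret minimal_clifford_system g "2 * a"
    unfolding g_def N_def by (intro uw_ssd_stbc_normalized_clifford_system[OF code k]) simp_all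
  have anti: "\<forall>i<2 * a. i \<noteq> j \<longrightarrow> sign_commute (g i) (N (AQ (Suc j))) (-1)" if "Suc j < k" for j
  proof (intro allI impI)
    fix i assume "i < 2 * a" "i \<noteq> j"
    then show "sign_commute (g i) (N (AQ (Suc j))) (-1)"
      using uw_ssd_stbc_normalized_anticommute[OF code, of "Suc i" "Suc j" "AI (Suc i)" "AQ (Suc j)"]
        that k
      by (simp add: sign_commute_def g_def N_def)
  qed
  have not_on_line: "N (AQ (Suc j)) + N (AQ (Suc j)) \<noteq> mat p ** g j"
    if j: "j < 2 * a" for j p
  proof
    assume "N (AQ (Suc j)) + N (AQ (Suc j)) = mat p ** g j"
    moreover have "cadj (N (AQ (Suc j))) = - N (AQ (Suc j))"
      unfolding N_def using uw_ssd_stbc_normalized(1)[OF code, of "Suc j" "AQ (Suc j)"] j k by simp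
    ultimately obtain r where "N (AQ (Suc j)) = r *\<^sub>R g j"
      using skew_double_eq_mat_mult_imp_real_multiple skew[OF j] unitary[OF j] by blast
    then have "AI 0 ** N (AQ (Suc j)) = AI 0 ** N (r *\<^sub>R AI (Suc j))"
      by (simp add: g_def N_def matrix_scalar_ac scalar_matrix_assoc)
    then have "AQ (Suc j) = r *\<^sub>R AI (Suc j)"
      using uw_ssd_stbc_unitary_weights[OF code, of 0] k
      by (simp add: N_def matrix_mul_assoc unitary_right_inverse)
    then show False using uw_ssd_stbc_not_real_multiple[OF code, of "Suc j"] j k by simp
  qed
  have "N (AQ 1) ** N (AQ 2) + N (AQ 2) ** N (AQ 1) = 0"
    using uw_ssd_stbc_normalized_anticommute[OF code, of 1 2 "AQ 1" "AQ 2"] k assms(1)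
    by (simp add: N_def)
  then have "(\<exists>p. N (AQ 1) + N (AQ 1) = mat p ** g 0) \<or> (\<exists>p. N (AQ 2) + N (AQ 2) = mat p ** g 1)"
    using anticommuting_pair_degenerate[of 0 1 "N (AQ 1)" "N (AQ 2)"] anti[of 0] anti[of 1] k assms(1)
    by (simp add: numeral_2_eq_2)
  then show False
    using not_on_line[of 0] not_on_line[of 1] assms(1) by (auto simp: numeral_2_eq_2)
qed

theorem theorem1:
  fixes a k :: nat and AI AQ :: "nat \<Rightarrow> complex^'n^'n"
  assumes "a \<ge> 1" and "CARD('n) = 2 ^ a"
    and "uw_ssd_stbc k AI AQ"
  shows "real k / 2 ^ a \<le> 2 * real a / 2 ^ a \<and> 2 * real a / 2 ^ a = real a / 2 ^ (a - 1)"
proof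
  have "real k \<le> 2 * real a" using uw_ssd_stbc_symbols_le[OF assms] by simp
  then show "real k / 2 ^ a \<le> 2 * real a / 2 ^ a" by (simp add: divide_right_mono)
  have "(2::real) ^ a = 2 * 2 ^ (a - 1)" using assms(1) by (simp flip: power_Suc)
  then show "2 * real a / 2 ^ a = real a / 2 ^ (a - 1)" by simp
qed

end
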